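(* Let $k\ge 4$ and let $p,p'$ be two POPs of size $k$ having the same set $I$ of isolated vertices, such that $k-1\in I$ and $k-3,k-2,k\notin I$. Suppose that in both $p$ and $p'$, each of the labels $k-2$ and $k$ is greater than every label $x\in[k-3]\setminus I$. Suppose that the subposets of $p$ and $p'$ induced by $[k-3]\setminus I$ coincide, and that $k<_p k-2$ while $k-2<_{p'}k$. Then $p\sim p'$.
   Context: A partially ordered pattern (POP) $p$ of size $k$ is a partial order $\le_p$ on $[k]=\{1,\dots,k\}$. A permutation $\pi=\pi_1\cdots\pi_n$ contains $p$ if there are indices $i_1<\dots<i_k$ with $\pi_{i_j}<\pi_{i_m}$ whenever $j<_p m$; otherwise it avoids $p$. $\mathfrak S_n(p)$ is the set of permutations of $[n]$ avoiding $p$, and $p\sim q$ (Wilf-equivalence) means $|\mathfrak S_n(p)|=|\mathfrak S_n(q)|$ for all $n\ge 1$. A vertex is isolated if it is comparable to no other vertex. *)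

theory Defs
  imports Main "HOL-Combinatorics.Permutations"
begin

definition pop :: "nat \<Rightarrow> (nat \<times> nat) set \<Rightarrow> bool" where
  "pop k r \<longleftrightarrow> partial_order_on {1..k} r \<and> r \<subseteq> {1..k} \<times> {1..k}"

definition pop_less :: "(nat \<times> nat) set \<Rightarrow> nat \<Rightarrow> nat \<Rightarrow> bool" where
  "pop_less r j m \<longleftrightarrow> (j, m) \<in> r \<and> j \<noteq> m"

definition isolated :: "nat \<Rightarrow> (nat \<times> nat) set \<Rightarrow> nat set" where
  "isolated k r = {v \<in> {1..k}. \<forall>u\<in>{1..k}. u \<noteq> v \<longrightarrow> \<not> pop_less r u v \<and> \<not> pop_less r v u}"

text \<open>A permutation of [n] is a bijection pi of {1..n}; pi i is the entry at position i.\<close>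
definition contains :: "(nat \<Rightarrow> nat) \<Rightarrow> nat \<Rightarrow> nat \<Rightarrow> (nat \<times> nat) set \<Rightarrow> bool" where
  "contains \<pi> n k r \<longleftrightarrow> (\<exists>idx :: nat \<Rightarrow> nat.
     strict_mono_on {1..k} idx \<and> idx ` {1..k} \<subseteq> {1..n} \<and>
     (\<forall>j\<in>{1..k}. \<forall>m\<in>{1..k}. pop_less r j m \<longrightarrow> \<pi> (idx j) < \<pi> (idx m)))"

definition avoiders :: "nat \<Rightarrow> nat \<Rightarrow> (nat \<times> nat) set \<Rightarrow> (nat \<Rightarrow> nat) set" where
  "avoiders n k r = {\<pi>. \<pi> permutes {1..n} \<and> \<not> contains \<pi> n k r}"

definition wilf_equiv :: "nat \<Rightarrow> (nat \<times> nat) set \<Rightarrow> (nat \<times> nat) set \<Rightarrow> bool" where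
  "wilf_equiv k r r' \<longleftrightarrow> (\<forall>n\<ge>1. card (avoiders n k r) = card (avoiders n k r'))"

end

theory Submission
  imports Defs
begin

text \<open>
  Call \<open>(x, y)\<close> a cell of \<open>\<pi>\<close> if the prefix pattern (the labels \<open>1..k-3\<close>) occurs in \<open>\<pi>\<close>
  strictly left of position \<open>x\<close> with all its non-isolated values below \<open>y\<close>. The cells form an
  up-closed (Ferrers) board, and \<open>p\<close> resp. \<open>p'\<close> occurs in \<open>\<pi>\<close> iff there are positions
  \<open>j + 2 \<le> l\<close> with \<open>(j, \<pi> l)\<close> a cell and \<open>\<pi> l < \<pi> j\<close>, resp. \<open>(j, \<pi> j)\<close> a cell and
  \<open>\<pi> j < \<pi> l\<close>. Positions \<open>x\<close> with \<open>(x, \<pi> x)\<close> a cell are active. A prefix occurrence can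
  always be chosen off the active positions, so redistributing the values of \<open>\<pi>\<close> on its active
  positions inside the board changes neither the board nor the active set. Hence the
  permutations with a fixed skeleton (active set and values elsewhere) correspond to the
  bijective placements on a fixed board, in which consecutive active rows coincide. Counted by
  deleting the first row, placements without a gapped descent and placements without a gapped
  ascent satisfy the same recurrence; summing over all skeletons gives \<open>p \<sim> p'\<close>.
\<close>

section \<open>Placements on up-closed boards\<close>

definition placements :: "nat set \<Rightarrow> nat set \<Rightarrow> (nat \<Rightarrow> nat \<Rightarrow> bool) \<Rightarrow> (nat \<Rightarrow> nat) set" where
  "placements X Y g = {\<sigma> \<in> X \<rightarrow>\<^sub>E Y. bij_betw \<sigma> X Y \<and> (\<forall>x\<in>X. g x (\<sigma> x))}"

definition gapped_pair :: "nat set \<Rightarrow> (nat \<Rightarrow> nat \<Rightarrow> nat \<Rightarrow> bool) \<Rightarrow> (nat \<Rightarrow> nat) \<Rightarrow> bool" where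
  "gapped_pair X P \<sigma> \<longleftrightarrow> (\<exists>j\<in>X. \<exists>l\<in>X. j + 2 \<le> l \<and> P j (\<sigma> j) (\<sigma> l))"

abbreviation gapped_descent :: "nat set \<Rightarrow> (nat \<Rightarrow> nat \<Rightarrow> bool) \<Rightarrow> (nat \<Rightarrow> nat) \<Rightarrow> bool" where
  "gapped_descent X g \<equiv> gapped_pair X (\<lambda>j a b. b < a \<and> g j b)"

abbreviation gapped_ascent :: "nat set \<Rightarrow> (nat \<Rightarrow> nat \<Rightarrow> bool) \<Rightarrow> (nat \<Rightarrow> nat) \<Rightarrow> bool" where
  "gapped_ascent X g \<equiv> gapped_pair X (\<lambda>j a b. a < b \<and> g j a)"

definition up_closed :: "(nat \<Rightarrow> nat \<Rightarrow> bool) \<Rightarrow> bool" where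
  "up_closed g \<longleftrightarrow> (\<forall>x x' y y'. g x y \<longrightarrow> x \<le> x' \<longrightarrow> y \<le> y' \<longrightarrow> g x' y')"

lemma up_closedD: "up_closed g \<Longrightarrow> g x y \<Longrightarrow> x \<le> x' \<Longrightarrow> y \<le> y' \<Longrightarrow> g x' y'"
  unfolding up_closed_def by blast

definition same_row_lengths :: "nat set \<Rightarrow> nat set \<Rightarrow> nat set \<Rightarrow> (nat \<Rightarrow> nat \<Rightarrow> bool) \<Rightarrow> bool" where
  "same_row_lengths X Y Y' g \<longleftrightarrow> finite X \<and> finite Y \<and> finite Y' \<and> card Y = card X \<and> card Y' = card X \<and>
     (\<forall>x\<in>X. card {y\<in>Y. g x y} = card {y\<in>Y'. g x y})"

lemma placementsD:
  assumes "\<sigma> \<in> placements X Y g"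
  shows "\<sigma> \<in> X \<rightarrow>\<^sub>E Y" "bij_betw \<sigma> X Y" "x \<in> X \<Longrightarrow> g x (\<sigma> x)" "x \<in> X \<Longrightarrow> \<sigma> x \<in> Y"
    "y \<in> Y \<Longrightarrow> \<exists>x\<in>X. \<sigma> x = y"
  using assms by (auto simp: placements_def bij_betw_def)

lemma finite_placements: "finite X \<Longrightarrow> finite Y \<Longrightarrow> finite (placements X Y g)"
  by (rule finite_subset[of _ "X \<rightarrow>\<^sub>E Y"]) (auto simp: placements_def finite_PiE)

lemma card_placements_fix:
  assumes "x \<in> X" "v \<in> Y" "g x v"
  shows "card {\<sigma>\<in>placements X Y g. \<sigma> x = v \<and> Q \<sigma>} =
         card {\<tau>\<in>placements (X - {x}) (Y - {v}) g. Q (\<tau>(x := v))}"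
proof -
  let ?T = "{\<tau>\<in>placements (X - {x}) (Y - {v}) g. Q (\<tau>(x := v))}"
  have "inj_on (\<lambda>\<tau>. \<tau>(x := v)) ?T"
  proof (rule inj_onI)
    fix \<tau> \<tau>' assume "\<tau> \<in> ?T" "\<tau>' \<in> ?T" and eq: "\<tau>(x := v) = \<tau>'(x := v)"
    then have "\<tau> x = \<tau>' x" by (auto simp: placements_def PiE_def extensional_def)
    with eq show "\<tau> = \<tau>'" by (metis fun_upd_triv fun_upd_upd)
  qed
  moreover have "(\<lambda>\<tau>. \<tau>(x := v)) ` ?T = {\<sigma>\<in>placements X Y g. \<sigma> x = v \<and> Q \<sigma>}"
  proof (intro equalityI subsetI)
    fix \<sigma> assume "\<sigma> \<in> (\<lambda>\<tau>. \<tau>(x := v)) ` ?T"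
    then obtain \<tau> where \<tau>: "\<tau> \<in> placements (X - {x}) (Y - {v}) g" "Q (\<tau>(x := v))" "\<sigma> = \<tau>(x := v)"
      by auto
    have "bij_betw \<sigma> (X - {x}) (Y - {v})"
      using placementsD(2)[OF \<tau>(1)] by (rule bij_betw_cong[THEN iffD1, rotated]) (simp add: \<tau>(3))
    then have "bij_betw \<sigma> (X - {x} \<union> {x}) (Y - {v} \<union> {\<sigma> x})"
      using \<tau>(3) by (intro notIn_Un_bij_betw) auto
    then have "bij_betw \<sigma> X Y"
      using \<tau>(3) assms by (simp add: insert_absorb)
    then show "\<sigma> \<in> {\<sigma>\<in>placements X Y g. \<sigma> x = v \<and> Q \<sigma>}"
      using \<tau> assms by (auto simp: placements_def)
  next
    fix \<sigma> assume \<sigma>: "\<sigma> \<in> {\<sigma>\<in>placements X Y g. \<sigma> x = v \<and> Q \<sigma>}"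
    then have bij: "bij_betw \<sigma> X Y" by (simp add: placements_def)
    then have "bij_betw \<sigma> (X - {x}) (Y - {v})"
      using \<sigma> assms by (intro bij_betw_DiffI) auto
    then have "bij_betw (\<sigma>(x := undefined)) (X - {x}) (Y - {v})"
      by (rule bij_betw_cong[THEN iffD1, rotated]) simp
    moreover have "\<sigma> y \<noteq> v" if "y \<in> X - {x}" for y
      using bij \<sigma> that assms(1) unfolding bij_betw_def inj_on_def by force
    ultimately have "\<sigma>(x := undefined) \<in> placements (X - {x}) (Y - {v}) g"
      using \<sigma> by (auto simp: placements_def PiE_def extensional_def)
    then show "\<sigma> \<in> (\<lambda>\<tau>. \<tau>(x := v)) ` ?T"
      using \<sigma> by (intro image_eqI[of _ _ "\<sigma>(x := undefined)"]) auto
  qed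
  ultimately show ?thesis by (metis (no_types, lifting) card_image)
qed

lemma card_Collect_split:
  assumes "finite S"
  shows "card {x\<in>S. P x} = card {x\<in>S. Q x \<and> P x} + card {x\<in>S. \<not> Q x \<and> P x}"
  using assms by (subst card_Un_disjoint[symmetric]) (auto intro: arg_cong[where f = card])

lemma Diff_singleton_nonempty_if_card_ge_2: "2 \<le> card S \<Longrightarrow> S - {a} \<noteq> {}"
proof
  assume "2 \<le> card S" "S - {a} = {}"
  then have "card S \<le> card {a}" by (intro card_mono) auto
  with \<open>2 \<le> card S\<close> show False by simp
qed

lemma Min_Diff_Min_in: "finite S \<Longrightarrow> 2 \<le> card S \<Longrightarrow> Min (S - {Min S}) \<in> S - {Min S}"
  by (intro Min_in Diff_singleton_nonempty_if_card_ge_2) simp_all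

lemma up_closed_Max_in_row:
  assumes "up_closed g" "finite Y" "y \<in> Y" "g x y"
  shows "Max Y \<in> Y" "g x (Max Y)"
proof -
  show "Max Y \<in> Y" using assms(2,3) by (auto intro: Max_in)
  show "g x (Max Y)" using up_closedD[OF assms(1,4) order_refl Max_ge[OF assms(2,3)]] .
qed

lemma up_closed_second_Max_in_row:
  assumes g: "up_closed g" and "finite Y" "2 \<le> card {y\<in>Y. g x y}"
  shows "Max (Y - {Max Y}) \<in> Y - {Max Y}" "g x (Max (Y - {Max Y}))"
proof -
  obtain y where "y \<in> {y\<in>Y. g x y} - {Max Y}" using Diff_singleton_nonempty_if_card_ge_2[OF assms(3)] by blast
  then show "Max (Y - {Max Y}) \<in> Y - {Max Y}" "g x (Max (Y - {Max Y}))"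
    using up_closed_Max_in_row[OF g, of "Y - {Max Y}" y x] assms(2) by auto
qed

lemma gapped_pair_cong: "(\<And>x. x \<in> X \<Longrightarrow> \<sigma> x = \<tau> x) \<Longrightarrow> gapped_pair X P \<sigma> \<longleftrightarrow> gapped_pair X P \<tau>"
  unfolding gapped_pair_def by auto

lemma gapped_pair_upd_front:
  assumes "\<And>x. x \<in> X \<Longrightarrow> x0 \<le> x" "F \<subseteq> {x0, Suc x0}" "\<And>x. x \<notin> F \<Longrightarrow> \<sigma> x = \<tau> x"
    and "\<And>j l. j \<in> F \<Longrightarrow> l \<in> X - F \<Longrightarrow> \<not> P j (\<sigma> j) (\<sigma> l)"
  shows "gapped_pair X P \<sigma> \<longleftrightarrow> gapped_pair (X - F) P \<tau>"
proof
  assume "gapped_pair X P \<sigma>"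
  then obtain j l where jl: "j \<in> X" "l \<in> X" "j + 2 \<le> l" "P j (\<sigma> j) (\<sigma> l)"
    unfolding gapped_pair_def by blast
  have "l \<notin> F" using assms(1,2) jl(1,3) by fastforce
  moreover from this have "j \<notin> F" using assms(4) jl by blast
  ultimately show "gapped_pair (X - F) P \<tau>"
    using jl assms(3) unfolding gapped_pair_def by (intro bexI[of _ j] bexI[of _ l]) auto
next
  assume "gapped_pair (X - F) P \<tau>"
  then obtain j l where "j \<in> X - F" "l \<in> X - F" "j + 2 \<le> l" "P j (\<tau> j) (\<tau> l)"
    unfolding gapped_pair_def by blast
  then show "gapped_pair X P \<sigma>"
    using assms(3) unfolding gapped_pair_def by (intro bexI[of _ j] bexI[of _ l]) auto
qed

lemma card_avoiding_placements_rec: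
  fixes bad :: "nat set \<Rightarrow> (nat \<Rightarrow> nat) \<Rightarrow> bool"
  assumes fin: "finite X" "finite Y" and x: "x \<in> X" and v: "v \<in> Y" "g x v"
    and bad1: "\<And>\<tau>. \<tau> \<in> placements (X - {x}) (Y - {v}) g \<Longrightarrow> bad X (\<tau>(x := v)) \<longleftrightarrow> bad (X - {x}) \<tau>"
    and other: "\<And>\<sigma>. \<sigma> \<in> placements X Y g \<Longrightarrow> \<not> bad X \<sigma> \<Longrightarrow> \<sigma> x \<noteq> v \<Longrightarrow> C \<and> \<sigma> x = w \<and> \<sigma> (Suc x) = v"
    and C: "C \<Longrightarrow> Suc x \<in> X \<and> w \<in> Y - {v} \<and> g x w \<and> g (Suc x) v"
    and bad2: "\<And>\<rho>. C \<Longrightarrow> \<rho> \<in> placements (X - {x} - {Suc x}) (Y - {w} - {v}) g \<Longrightarrow>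
       bad X (\<rho>(Suc x := v, x := w)) \<longleftrightarrow> bad (X - {x} - {Suc x}) \<rho>"
  shows "card {\<sigma>\<in>placements X Y g. \<not> bad X \<sigma>} =
    card {\<tau>\<in>placements (X - {x}) (Y - {v}) g. \<not> bad (X - {x}) \<tau>} +
    (if C then card {\<rho>\<in>placements (X - {x} - {Suc x}) (Y - {w} - {v}) g. \<not> bad (X - {x} - {Suc x}) \<rho>}
     else 0)"
proof -
  let ?P = "placements X Y g"
  have "card {\<sigma>\<in>?P. \<sigma> x = v \<and> \<not> bad X \<sigma>} =
      card {\<tau>\<in>placements (X - {x}) (Y - {v}) g. \<not> bad X (\<tau>(x := v))}"
    using x v by (rule card_placements_fix)
  also have "\<dots> = card {\<tau>\<in>placements (X - {x}) (Y - {v}) g. \<not> bad (X - {x}) \<tau>}"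
    using bad1 by (intro arg_cong[where f = card] Collect_cong) blast
  finally have first: "card {\<sigma>\<in>?P. \<sigma> x = v \<and> \<not> bad X \<sigma>} = \<dots>" .
  have second: "card {\<sigma>\<in>?P. \<sigma> x \<noteq> v \<and> \<not> bad X \<sigma>} =
    (if C then card {\<rho>\<in>placements (X - {x} - {Suc x}) (Y - {w} - {v}) g. \<not> bad (X - {x} - {Suc x}) \<rho>}
     else 0)"
  proof (cases C)
    case False
    have empty: "{\<sigma>\<in>?P. \<sigma> x \<noteq> v \<and> \<not> bad X \<sigma>} = {}" using other False by blast
    show ?thesis unfolding empty using False by simp
  next
    case True
    note C = C[OF True]
    have "{\<sigma>\<in>?P. \<sigma> x \<noteq> v \<and> \<not> bad X \<sigma>} = {\<sigma>\<in>?P. \<sigma> x = w \<and> \<sigma> (Suc x) = v \<and> \<not> bad X \<sigma>}"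
      using other C by auto
    then have "card {\<sigma>\<in>?P. \<sigma> x \<noteq> v \<and> \<not> bad X \<sigma>} =
        card {\<tau>\<in>placements (X - {x}) (Y - {w}) g. \<tau> (Suc x) = v \<and> \<not> bad X (\<tau>(x := w))}"
      using card_placements_fix[OF x, of w Y g "\<lambda>\<sigma>. \<sigma> (Suc x) = v \<and> \<not> bad X \<sigma>"] C by simp
    also have "\<dots> = card {\<rho>\<in>placements (X - {x} - {Suc x}) (Y - {w} - {v}) g.
        \<not> bad X (\<rho>(Suc x := v, x := w))}"
      using C v by (intro card_placements_fix) auto
    also have "\<dots> = card {\<rho>\<in>placements (X - {x} - {Suc x}) (Y - {w} - {v}) g.
        \<not> bad (X - {x} - {Suc x}) \<rho>}"
      using bad2[OF True] by (intro arg_cong[where f = card] Collect_cong) blast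
    finally show ?thesis using True by simp
  qed
  show ?thesis
    using card_Collect_split[OF finite_placements[OF fin],
        where P = "\<lambda>\<sigma>. \<not> bad X \<sigma>" and Q = "\<lambda>\<sigma>. \<sigma> x = v"]
      first second by simp
qed

lemma descent_free_lower_value_at_Suc:
  assumes x0: "x0 \<in> X" "\<And>x. x \<in> X \<Longrightarrow> x0 \<le> x"
    and \<sigma>: "\<sigma> \<in> placements X Y g" "\<not> gapped_descent X g \<sigma>"
    and y: "y \<in> Y" "g x0 y" "y < \<sigma> x0"
  shows "Suc x0 \<in> X \<and> \<sigma> (Suc x0) = y"
proof -
  obtain l where l: "l \<in> X" "\<sigma> l = y" using placementsD(5)[OF \<sigma>(1) y(1)] by blast
  have "\<not> x0 + 2 \<le> l"
    using \<sigma>(2) x0(1) l y(2,3) unfolding gapped_pair_def by blast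
  moreover have "l \<noteq> x0" using l(2) y(3) by blast
  ultimately have "l = Suc x0" using x0(2)[OF l(1)] by simp
  then show ?thesis using l by simp
qed

lemma descent_free_first_row:
  assumes fin: "finite Y" and x0: "x0 \<in> X" "\<And>x. x \<in> X \<Longrightarrow> x0 \<le> x"
    and \<sigma>: "\<sigma> \<in> placements X Y g" "\<not> gapped_descent X g \<sigma>"
    and row: "Y0 = {y\<in>Y. g x0 y}" and m: "m1 = Min Y0" "m2 = Min (Y0 - {m1})" and "\<sigma> x0 \<noteq> m1"
  shows "Suc x0 \<in> X \<and> 2 \<le> card Y0 \<and> \<sigma> x0 = m2 \<and> \<sigma> (Suc x0) = m1"
proof -
  have fin0: "finite Y0" using row fin by simp
  have \<sigma>0: "\<sigma> x0 \<in> Y0" using placementsD(3,4)[OF \<sigma>(1) x0(1)] row by simp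
  then have "Y0 \<noteq> {}" by blast
  then have m1: "m1 \<in> Y0" "m1 \<le> \<sigma> x0" using fin0 \<sigma>0 m(1) by simp_all
  with \<open>\<sigma> x0 \<noteq> m1\<close> have m1: "m1 \<in> Y0" "m1 < \<sigma> x0" by simp_all
  then have succ: "Suc x0 \<in> X" "\<sigma> (Suc x0) = m1" using descent_free_lower_value_at_Suc[OF x0 \<sigma>] row by auto
  have "card {m1, \<sigma> x0} \<le> card Y0" using \<sigma>0 m1(1) fin0 by (intro card_mono) auto
  then have two: "2 \<le> card Y0" using \<open>\<sigma> x0 \<noteq> m1\<close> by simp
  have m2: "m2 \<in> Y0 - {m1}" "m2 \<le> \<sigma> x0"
    using Min_Diff_Min_in[OF fin0 two] Min_le[of "Y0 - {m1}" "\<sigma> x0"] fin0 \<sigma>0 \<open>\<sigma> x0 \<noteq> m1\<close> m by auto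
  have "\<not> m2 < \<sigma> x0"
  proof
    assume "m2 < \<sigma> x0"
    then have "\<sigma> (Suc x0) = m2" using descent_free_lower_value_at_Suc[OF x0 \<sigma>] m2(1) row by auto
    with succ(2) m2(1) show False by simp
  qed
  with m2(2) succ two show ?thesis by simp
qed

lemma card_descent_free_rec:
  assumes fin: "finite X" "finite Y" and x0: "x0 \<in> X" "\<And>x. x \<in> X \<Longrightarrow> x0 \<le> x"
    and g: "up_closed g" "\<And>y. Suc x0 \<in> X \<Longrightarrow> g (Suc x0) y \<Longrightarrow> g x0 y"
    and row: "Y0 = {y\<in>Y. g x0 y}" "Y0 \<noteq> {}" and m: "m1 = Min Y0" "m2 = Min (Y0 - {m1})"
  shows "card {\<sigma>\<in>placements X Y g. \<not> gapped_descent X g \<sigma>} =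
    card {\<tau>\<in>placements (X - {x0}) (Y - {m1}) g. \<not> gapped_descent (X - {x0}) g \<tau>} +
    (if Suc x0 \<in> X \<and> 2 \<le> card Y0
     then card {\<rho>\<in>placements (X - {x0} - {Suc x0}) (Y - {m2} - {m1}) g.
       \<not> gapped_descent (X - {x0} - {Suc x0}) g \<rho>}
     else 0)"
proof (rule card_avoiding_placements_rec[OF fin x0(1)])
  have fin0: "finite Y0" using row(1) fin(2) by simp
  have m1: "m1 \<in> Y0" "\<And>y. y \<in> Y0 \<Longrightarrow> m1 \<le> y" using fin0 row(2) m(1) by simp_all
  then show "m1 \<in> Y" "g x0 m1" using row(1) by simp_all
  have m2: "m2 \<in> Y0 - {m1}" "\<And>y. y \<in> Y0 - {m1} \<Longrightarrow> m2 \<le> y" if "2 \<le> card Y0"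
    using Min_Diff_Min_in[OF fin0 that] fin0 by (simp_all add: m)
  show "Suc x0 \<in> X \<and> m2 \<in> Y - {m1} \<and> g x0 m2 \<and> g (Suc x0) m1" if "Suc x0 \<in> X \<and> 2 \<le> card Y0"
    using that m2 m1 row(1) up_closedD[OF g(1), of x0 m1 "Suc x0" m1] by auto
  show "(Suc x0 \<in> X \<and> 2 \<le> card Y0) \<and> \<sigma> x0 = m2 \<and> \<sigma> (Suc x0) = m1"
    if "\<sigma> \<in> placements X Y g" "\<not> gapped_descent X g \<sigma>" "\<sigma> x0 \<noteq> m1" for \<sigma>
    using descent_free_first_row[OF fin(2) x0 that(1,2) row(1) m that(3)] by blast
  show "gapped_descent X g (\<tau>(x0 := m1)) \<longleftrightarrow> gapped_descent (X - {x0}) g \<tau>"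
    if \<tau>: "\<tau> \<in> placements (X - {x0}) (Y - {m1}) g" for \<tau>
  proof (rule gapped_pair_upd_front[OF x0(2)])
    show "\<not> ((\<tau>(x0 := m1)) l < (\<tau>(x0 := m1)) j \<and> g j ((\<tau>(x0 := m1)) l))"
      if "j \<in> {x0}" "l \<in> X - {x0}" for j l
      using that placementsD(4)[OF \<tau>, of l] m1(2) row(1) by fastforce
  qed auto
  show "gapped_descent X g (\<rho>(Suc x0 := m1, x0 := m2)) \<longleftrightarrow> gapped_descent (X - {x0} - {Suc x0}) g \<rho>"
    if C: "Suc x0 \<in> X \<and> 2 \<le> card Y0"
      and \<rho>: "\<rho> \<in> placements (X - {x0} - {Suc x0}) (Y - {m2} - {m1}) g" for \<rho>
  proof -
    let ?\<sigma> = "\<rho>(Suc x0 := m1, x0 := m2)"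
    have "gapped_descent X g ?\<sigma> \<longleftrightarrow> gapped_descent (X - {x0, Suc x0}) g \<rho>"
    proof (rule gapped_pair_upd_front[OF x0(2)])
      show "\<not> (?\<sigma> l < ?\<sigma> j \<and> g j (?\<sigma> l))" if "j \<in> {x0, Suc x0}" "l \<in> X - {x0, Suc x0}" for j l
      proof
        assume "?\<sigma> l < ?\<sigma> j \<and> g j (?\<sigma> l)"
        then have "\<rho> l < ?\<sigma> j" "g x0 (\<rho> l)" using that g(2) C by auto
        moreover have "\<rho> l \<in> Y0 - {m1}" "\<rho> l \<noteq> m2"
          using placementsD(4)[OF \<rho>, of l] that \<open>g x0 (\<rho> l)\<close> row(1) by auto
        ultimately show False using that m2 C m1(2) by fastforce
      qed
    qed auto
    moreover have "X - {x0} - {Suc x0} = X - {x0, Suc x0}" by blast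
    ultimately show ?thesis by simp
  qed
qed

lemma ascent_free_higher_value_at_Suc:
  assumes x0: "x0 \<in> X" "\<And>x. x \<in> X \<Longrightarrow> x0 \<le> x"
    and \<sigma>: "\<sigma> \<in> placements X Y g" "\<not> gapped_ascent X g \<sigma>"
    and y: "y \<in> Y" "\<sigma> x0 < y"
  shows "Suc x0 \<in> X \<and> \<sigma> (Suc x0) = y"
proof -
  obtain l where l: "l \<in> X" "\<sigma> l = y" using placementsD(5)[OF \<sigma>(1) y(1)] by blast
  have "\<not> x0 + 2 \<le> l"
    using \<sigma>(2) x0(1) l y(2) placementsD(3)[OF \<sigma>(1) x0(1)] unfolding gapped_pair_def by blast
  moreover have "l \<noteq> x0" using l(2) y(2) by blast
  ultimately have "l = Suc x0" using x0(2)[OF l(1)] by simp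
  then show ?thesis using l by simp
qed

lemma ascent_free_first_row:
  assumes fin: "finite Y" and x0: "x0 \<in> X" "\<And>x. x \<in> X \<Longrightarrow> x0 \<le> x"
    and \<sigma>: "\<sigma> \<in> placements X Y g" "\<not> gapped_ascent X g \<sigma>"
    and M: "M1 = Max Y" "M2 = Max (Y - {M1})" and "\<sigma> x0 \<noteq> M1"
  shows "Suc x0 \<in> X \<and> \<sigma> x0 = M2 \<and> \<sigma> (Suc x0) = M1"
proof -
  have \<sigma>0: "\<sigma> x0 \<in> Y" using placementsD(4)[OF \<sigma>(1) x0(1)] .
  then have "Y \<noteq> {}" by blast
  then have "M1 \<in> Y" "\<sigma> x0 \<le> M1" using fin \<sigma>0 M(1) by simp_all
  with \<open>\<sigma> x0 \<noteq> M1\<close> have M1: "M1 \<in> Y" "\<sigma> x0 < M1" by simp_all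
  then have succ: "Suc x0 \<in> X" "\<sigma> (Suc x0) = M1" using ascent_free_higher_value_at_Suc[OF x0 \<sigma>] by auto
  have M2: "M2 \<in> Y - {M1}" "\<sigma> x0 \<le> M2"
    using Max_in[of "Y - {M1}"] Max_ge[of "Y - {M1}" "\<sigma> x0"] fin \<sigma>0 \<open>\<sigma> x0 \<noteq> M1\<close> M by auto
  have "\<not> \<sigma> x0 < M2"
  proof
    assume "\<sigma> x0 < M2"
    then have "\<sigma> (Suc x0) = M2" using ascent_free_higher_value_at_Suc[OF x0 \<sigma>] M2(1) by auto
    with succ(2) M2(1) show False by simp
  qed
  with M2(2) succ show ?thesis by simp
qed

lemma card_ascent_free_rec:
  assumes fin: "finite X" "finite Y" and x0: "x0 \<in> X" "\<And>x. x \<in> X \<Longrightarrow> x0 \<le> x"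
    and g: "up_closed g"
    and row: "Y0 = {y\<in>Y. g x0 y}" "Y0 \<noteq> {}" and M: "M1 = Max Y" "M2 = Max (Y - {M1})"
  shows "card {\<sigma>\<in>placements X Y g. \<not> gapped_ascent X g \<sigma>} =
    card {\<tau>\<in>placements (X - {x0}) (Y - {M1}) g. \<not> gapped_ascent (X - {x0}) g \<tau>} +
    (if Suc x0 \<in> X \<and> 2 \<le> card Y0
     then card {\<rho>\<in>placements (X - {x0} - {Suc x0}) (Y - {M2} - {M1}) g.
       \<not> gapped_ascent (X - {x0} - {Suc x0}) g \<rho>}
     else 0)"
proof (rule card_avoiding_placements_rec[OF fin x0(1)])
  obtain y where "y \<in> Y" "g x0 y" using row by blast
  then have M1: "M1 \<in> Y" "g x0 M1" "\<And>y. y \<in> Y \<Longrightarrow> y \<le> M1"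
    using up_closed_Max_in_row[OF g fin(2)] fin(2) M(1) by auto
  then show "M1 \<in> Y" "g x0 M1" by simp_all
  have M2: "M2 \<in> Y - {M1}" "g x0 M2" "\<And>y. y \<in> Y - {M1} \<Longrightarrow> y \<le> M2" if "2 \<le> card Y0"
    using up_closed_second_Max_in_row[OF g fin(2)] that row(1) fin(2) M by auto
  show "Suc x0 \<in> X \<and> M2 \<in> Y - {M1} \<and> g x0 M2 \<and> g (Suc x0) M1" if "Suc x0 \<in> X \<and> 2 \<le> card Y0"
    using that M2 M1 up_closedD[OF g, of x0 M1 "Suc x0" M1] by auto
  show "(Suc x0 \<in> X \<and> 2 \<le> card Y0) \<and> \<sigma> x0 = M2 \<and> \<sigma> (Suc x0) = M1"
    if \<sigma>: "\<sigma> \<in> placements X Y g" "\<not> gapped_ascent X g \<sigma>" "\<sigma> x0 \<noteq> M1" for \<sigma>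
  proof -
    have "\<sigma> x0 \<in> Y0" using placementsD(3,4)[OF \<sigma>(1) x0(1)] row(1) by simp
    moreover have "M1 \<in> Y0" using M1 row(1) by simp
    ultimately have "card {M1, \<sigma> x0} \<le> card Y0" using fin(2) row(1) by (intro card_mono) auto
    then have "2 \<le> card Y0" using \<sigma>(3) by simp
    then show ?thesis using ascent_free_first_row[OF fin(2) x0 \<sigma>(1,2) M \<sigma>(3)] by blast
  qed
  show "gapped_ascent X g (\<tau>(x0 := M1)) \<longleftrightarrow> gapped_ascent (X - {x0}) g \<tau>"
    if \<tau>: "\<tau> \<in> placements (X - {x0}) (Y - {M1}) g" for \<tau>
  proof (rule gapped_pair_upd_front[OF x0(2)])
    show "\<not> ((\<tau>(x0 := M1)) j < (\<tau>(x0 := M1)) l \<and> g j ((\<tau>(x0 := M1)) j))"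
      if "j \<in> {x0}" "l \<in> X - {x0}" for j l
      using that placementsD(4)[OF \<tau>, of l] M1(3) by fastforce
  qed auto
  show "gapped_ascent X g (\<rho>(Suc x0 := M1, x0 := M2)) \<longleftrightarrow> gapped_ascent (X - {x0} - {Suc x0}) g \<rho>"
    if C: "Suc x0 \<in> X \<and> 2 \<le> card Y0"
      and \<rho>: "\<rho> \<in> placements (X - {x0} - {Suc x0}) (Y - {M2} - {M1}) g" for \<rho>
  proof -
    let ?\<sigma> = "\<rho>(Suc x0 := M1, x0 := M2)"
    have "gapped_ascent X g ?\<sigma> \<longleftrightarrow> gapped_ascent (X - {x0, Suc x0}) g \<rho>"
    proof (rule gapped_pair_upd_front[OF x0(2)])
      show "\<not> (?\<sigma> j < ?\<sigma> l \<and> g j (?\<sigma> j))" if "j \<in> {x0, Suc x0}" "l \<in> X - {x0, Suc x0}" for j l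
      proof -
        have "\<rho> l \<le> M2" "M2 \<le> M1" using placementsD(4)[OF \<rho>, of l] that M2 C M1(3) by auto
        then show ?thesis using that by auto
      qed
    qed auto
    moreover have "X - {x0} - {Suc x0} = X - {x0, Suc x0}" by blast
    ultimately show ?thesis by simp
  qed
qed

lemma same_row_lengths_remove:
  assumes "same_row_lengths X Y Y' g" "x \<in> X" "v \<in> Y" "v' \<in> Y'"
    and "\<And>x'. x' \<in> X \<Longrightarrow> g x' v \<and> g x' v'"
  shows "same_row_lengths (X - {x}) (Y - {v}) (Y' - {v'}) g"
proof -
  have "{y\<in>Y - {v}. g x' y} = {y\<in>Y. g x' y} - {v}" "{y\<in>Y' - {v'}. g x' y} = {y\<in>Y'. g x' y} - {v'}"
    for x' by auto
  then show ?thesis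
    using assms by (auto simp: same_row_lengths_def card_Diff_singleton)
qed

lemma same_row_lengths_remove_first_rows:
  assumes g: "up_closed g" and rows: "same_row_lengths X Y Y' g"
    and x0: "x0 \<in> X" "\<And>x. x \<in> X \<Longrightarrow> x0 \<le> x"
    and row: "Y0 = {y\<in>Y. g x0 y}" "Y0 \<noteq> {}" and m: "m1 = Min Y0" "m2 = Min (Y0 - {m1})"
    and M: "M1 = Max Y'" "M2 = Max (Y' - {M1})"
  shows "same_row_lengths (X - {x0}) (Y - {m1}) (Y' - {M1}) g"
    and "Suc x0 \<in> X \<Longrightarrow> 2 \<le> card Y0 \<Longrightarrow>
      same_row_lengths (X - {x0} - {Suc x0}) (Y - {m2} - {m1}) (Y' - {M2} - {M1}) g"
proof -
  have fin: "finite Y" "finite Y'" and card0: "card {y\<in>Y'. g x0 y} = card Y0"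
    using rows x0(1) row(1) by (simp_all add: same_row_lengths_def)
  have all_rows: "g x y" if "x \<in> X" "g x0 y" for x y
    using up_closedD[OF g that(2) x0(2)[OF that(1)]] by simp
  have m1: "m1 \<in> Y" "g x0 m1" using Min_in[of Y0] row fin(1) by (simp_all add: m)
  have "card Y0 \<noteq> 0" using row fin(1) by simp
  then have "{y\<in>Y'. g x0 y} \<noteq> {}" using card0 by force
  then have M1: "M1 \<in> Y'" "g x0 M1" using up_closed_Max_in_row[OF g fin(2)] by (auto simp: M)
  show "same_row_lengths (X - {x0}) (Y - {m1}) (Y' - {M1}) g"
    using x0(1) m1 M1 all_rows by (intro same_row_lengths_remove[OF rows]) auto
  assume "Suc x0 \<in> X" "2 \<le> card Y0"
  moreover have "m2 \<in> Y0 - {m1}" using Min_Diff_Min_in[OF _ \<open>2 \<le> card Y0\<close>] row fin by (simp add: m)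
  moreover have "M2 \<in> Y' - {M1}" "g x0 M2"
    using up_closed_second_Max_in_row[OF g fin(2), of x0] \<open>2 \<le> card Y0\<close> card0 by (simp_all add: M)
  ultimately show "same_row_lengths (X - {x0} - {Suc x0}) (Y - {m2} - {m1}) (Y' - {M2} - {M1}) g"
    using m1 M1 x0(1) all_rows row(1)
    by (intro same_row_lengths_remove[OF same_row_lengths_remove[OF rows]]) auto
qed

theorem card_descent_free_eq_ascent_free:
  assumes g: "up_closed g" and "same_row_lengths X Y Y' g"
    and "\<And>x y. x \<in> X \<Longrightarrow> Suc x \<in> X \<Longrightarrow> g (Suc x) y \<Longrightarrow> g x y"
  shows "card {\<sigma>\<in>placements X Y g. \<not> gapped_descent X g \<sigma>} =
    card {\<sigma>\<in>placements X Y' g. \<not> gapped_ascent X g \<sigma>}"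
  using assms(2,3)
proof (induction "card X" arbitrary: X Y Y' rule: less_induct)
  case less
  note rows = less.prems(1) and adj = less.prems(2)
  have fin: "finite X" "finite Y" "finite Y'" using rows by (simp_all add: same_row_lengths_def)
  show ?case
  proof (cases "X = {}")
    case True
    then have "Y = {}" "Y' = {}" using rows fin by (simp_all add: same_row_lengths_def)
    then show ?thesis using True by (simp add: gapped_pair_def)
  next
    case False
    define x0 where "x0 = Min X"
    have x0: "x0 \<in> X" "\<And>x. x \<in> X \<Longrightarrow> x0 \<le> x" using fin False by (simp_all add: x0_def)
    define Y0 Y0' where "Y0 = {y\<in>Y. g x0 y}" and "Y0' = {y\<in>Y'. g x0 y}"
    have "card Y0 = card Y0'" "finite Y0" "finite Y0'"
      using rows x0(1) fin by (simp_all add: same_row_lengths_def Y0_def Y0'_def)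
    show ?thesis
    proof (cases "Y0 = {}")
      case True
      with \<open>card Y0 = card Y0'\<close> \<open>finite Y0'\<close> have "Y0' = {}" by simp
      with True have "placements X Y g = {}" "placements X Y' g = {}"
        using placementsD(3,4)[OF _ x0(1)] unfolding Y0_def Y0'_def by blast+
      then show ?thesis by simp
    next
      case False
      with \<open>card Y0 = card Y0'\<close> \<open>finite Y0\<close> have False': "Y0' \<noteq> {}" by auto
      define m1 m2 M1 M2 where "m1 = Min Y0" and "m2 = Min (Y0 - {m1})"
        and "M1 = Max Y'" and "M2 = Max (Y' - {M1})"
      note rows' = same_row_lengths_remove_first_rows[OF g rows x0 Y0_def False m1_def m2_def M1_def M2_def]
      have "card (X - {x0} - {Suc x0}) < card X"
        using fin(1) x0(1) by (meson Diff_subset card_Diff1_less le_less_trans card_mono finite_Diff)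
      with card_Diff1_less[OF fin(1) x0(1)] rows' adj
      have "card {\<tau>\<in>placements (X - {x0}) (Y - {m1}) g. \<not> gapped_descent (X - {x0}) g \<tau>} =
          card {\<tau>\<in>placements (X - {x0}) (Y' - {M1}) g. \<not> gapped_ascent (X - {x0}) g \<tau>}"
        "Suc x0 \<in> X \<Longrightarrow> 2 \<le> card Y0 \<Longrightarrow>
          card {\<rho>\<in>placements (X - {x0} - {Suc x0}) (Y - {m2} - {m1}) g.
            \<not> gapped_descent (X - {x0} - {Suc x0}) g \<rho>} =
          card {\<rho>\<in>placements (X - {x0} - {Suc x0}) (Y' - {M2} - {M1}) g.
            \<not> gapped_ascent (X - {x0} - {Suc x0}) g \<rho>}"
        by (auto intro!: less.hyps)
      then show ?thesis
        using card_descent_free_rec[OF fin(1,2) x0 g adj[OF x0(1)] Y0_def False m1_def m2_def]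
          card_ascent_free_rec[OF fin(1,3) x0 g Y0'_def False' M1_def M2_def] \<open>card Y0 = card Y0'\<close>
        by simp
    qed
  qed
qed

section \<open>Permutations with a common skeleton\<close>

lemma card_Collect_bij_betw:
  assumes "bij_betw f A B" "\<And>x. x \<in> A \<Longrightarrow> P x \<longleftrightarrow> Q (f x)"
  shows "card {x\<in>A. P x} = card {y\<in>B. Q y}"
proof -
  have "B = f ` A" using assms(1) by (simp add: bij_betw_def)
  then have "{y\<in>B. Q y} = f ` {x\<in>A. P x}" using assms(2) by auto
  moreover have "inj_on f {x\<in>A. P x}"
    using bij_betw_imp_inj_on[OF assms(1)] by (rule inj_on_subset) blast
  ultimately show ?thesis by (simp add: card_image)
qed

lemma card_Collect_eq_by_fibres:
  assumes "finite S" "\<And>\<kappa>. \<kappa> \<in> f ` S \<Longrightarrow> card {x\<in>S. f x = \<kappa> \<and> P x} = card {x\<in>S. f x = \<kappa> \<and> Q x}"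
  shows "card {x\<in>S. P x} = card {x\<in>S. Q x}"
proof -
  have split: "card {x\<in>S. T x} = (\<Sum>\<kappa>\<in>f ` S. card {x\<in>S. f x = \<kappa> \<and> T x})" for T
  proof -
    have "card {x\<in>S. T x} = card (\<Union>\<kappa>\<in>f ` S. {x\<in>S. f x = \<kappa> \<and> T x})"
      by (rule arg_cong[where f = card]) auto
    also have "\<dots> = (\<Sum>\<kappa>\<in>f ` S. card {x\<in>S. f x = \<kappa> \<and> T x})"
      using assms(1) by (intro card_UN_disjoint) auto
    finally show ?thesis .
  qed
  show ?thesis using split[of P] split[of Q] assms(2) by simp
qed

lemma permutes_image_eq_if_agree_outside:
  assumes "\<pi> permutes S" "\<pi>0 permutes S" "X \<subseteq> S" "\<And>z. z \<in> S - X \<Longrightarrow> \<pi> z = \<pi>0 z"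
  shows "\<pi> ` X = \<pi>0 ` X"
proof -
  have "\<pi> ` X = \<pi> ` S - \<pi> ` (S - X)"
    using image_set_diff[OF permutes_inj[OF assms(1)], of S "S - X"] assms(3) by (simp add: Diff_Diff_Int Int_absorb1)
  also have "\<dots> = \<pi>0 ` S - \<pi>0 ` (S - X)"
    using assms(4) permutes_image[OF assms(1)] permutes_image[OF assms(2)] by simp
  also have "\<dots> = \<pi>0 ` X"
    using image_set_diff[OF permutes_inj[OF assms(2)], of S "S - X"] assms(3) by (simp add: Diff_Diff_Int Int_absorb1)
  finally show ?thesis .
qed

lemma permutes_refill:
  assumes "\<pi>0 permutes S" "X \<subseteq> S" "bij_betw \<sigma> X (\<pi>0 ` X)"
  shows "(\<lambda>x. if x \<in> X then \<sigma> x else \<pi>0 x) permutes S"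
proof (rule bij_imp_permutes)
  let ?\<pi> = "\<lambda>x. if x \<in> X then \<sigma> x else \<pi>0 x"
  have "bij_betw ?\<pi> X (\<pi>0 ` X)"
    using assms(3) by (rule bij_betw_cong[THEN iffD1, rotated]) simp
  moreover have "bij_betw \<pi>0 (S - X) (S - \<pi>0 ` X)"
    using permutes_imp_bij[OF assms(1)] assms(2)
    by (metis Diff_subset bij_betw_subset image_set_diff permutes_image permutes_inj assms(1))
  then have "bij_betw ?\<pi> (S - X) (S - \<pi>0 ` X)"
    by (rule bij_betw_cong[THEN iffD1, rotated]) simp
  ultimately have "bij_betw ?\<pi> (X \<union> (S - X)) (\<pi>0 ` X \<union> (S - \<pi>0 ` X))"
    by (rule bij_betw_combine) blast
  moreover have "\<pi>0 ` X \<subseteq> S" using assms(2) permutes_image[OF assms(1)] by blast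
  ultimately show "bij_betw ?\<pi> S S" using assms(2) by (simp add: Un_Diff_cancel sup.absorb2)
  show "?\<pi> x = x" if "x \<notin> S" for x using that assms(2) permutes_not_in[OF assms(1)] by auto
qed

text \<open>\<open>A\<close> is the set of non-isolated labels of the prefix \<open>1..k-3\<close>; only the restriction of
  \<open>R\<close> to \<open>A\<close> is used. The isolated labels of the prefix still occupy positions.\<close>
locale tail_swap =
  fixes n k :: nat and A :: "nat set" and R :: "(nat \<times> nat) set"
  assumes k_ge_4: "4 \<le> k" and A_subset: "A \<subseteq> {1..k-3}" and last_in_A: "k - 3 \<in> A"
begin

definition prefix_occ :: "(nat \<Rightarrow> nat) \<Rightarrow> (nat \<Rightarrow> nat) \<Rightarrow> bool" where
  "prefix_occ \<pi> W \<longleftrightarrow> strict_mono_on {1..k-3} W \<and> W ` {1..k-3} \<subseteq> {1..n} \<and>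
     (\<forall>a\<in>A. \<forall>b\<in>A. pop_less R a b \<longrightarrow> \<pi> (W a) < \<pi> (W b))"

definition southwest_occ :: "(nat \<Rightarrow> nat) \<Rightarrow> nat \<Rightarrow> nat \<Rightarrow> bool" where
  "southwest_occ \<pi> x y \<longleftrightarrow> (\<exists>W. prefix_occ \<pi> W \<and> W (k-3) < x \<and> (\<forall>a\<in>A. \<pi> (W a) < y))"

definition active :: "(nat \<Rightarrow> nat) \<Rightarrow> nat set" where
  "active \<pi> = {x\<in>{1..n}. southwest_occ \<pi> x (\<pi> x)}"

definition skeleton :: "(nat \<Rightarrow> nat) \<Rightarrow> nat set \<times> (nat \<Rightarrow> nat)" where
  "skeleton \<pi> = (active \<pi>, restrict \<pi> (- active \<pi>))"

definition desc_tail_occ :: "(nat \<Rightarrow> nat) \<Rightarrow> bool" where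
  "desc_tail_occ \<pi> \<longleftrightarrow> (\<exists>j l. j + 2 \<le> l \<and> l \<le> n \<and> \<pi> l < \<pi> j \<and> southwest_occ \<pi> j (\<pi> l))"

definition asc_tail_occ :: "(nat \<Rightarrow> nat) \<Rightarrow> bool" where
  "asc_tail_occ \<pi> \<longleftrightarrow> (\<exists>j l. j + 2 \<le> l \<and> l \<le> n \<and> \<pi> j < \<pi> l \<and> southwest_occ \<pi> j (\<pi> j))"

lemma up_closed_southwest_occ: "up_closed (southwest_occ \<pi>)"
  unfolding up_closed_def southwest_occ_def by (blast intro: order_less_le_trans)

lemma last_in_prefix: "k - 3 \<in> {1..k-3}"
  using k_ge_4 by simp

lemma prefix_occ_le_last:
  assumes "prefix_occ \<pi> W" "i \<in> {1..k-3}"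
  shows "W i \<le> W (k-3)"
proof -
  have "strict_mono_on {1..k-3} W" using assms(1) by (simp add: prefix_occ_def)
  from strict_mono_on_leD[OF this assms(2) last_in_prefix] assms(2) show ?thesis by simp
qed

lemma prefix_occ_range: "prefix_occ \<pi> W \<Longrightarrow> i \<in> {1..k-3} \<Longrightarrow> W i \<in> {1..n}"
  unfolding prefix_occ_def by blast

lemma prefix_occ_cong: "(\<And>a. a \<in> A \<Longrightarrow> \<pi>' (W a) = \<pi> (W a)) \<Longrightarrow> prefix_occ \<pi>' W \<longleftrightarrow> prefix_occ \<pi> W"
  unfolding prefix_occ_def by auto

lemma active_subset: "active \<pi> \<subseteq> {1..n}"
  unfolding active_def by blast

lemma southwest_occ_pos:
  assumes "southwest_occ \<pi> x y"
  shows "1 \<le> x"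
proof -
  obtain W where "prefix_occ \<pi> W" "W (k-3) < x" using assms unfolding southwest_occ_def by blast
  with prefix_occ_range[OF this(1) last_in_prefix] show ?thesis by simp
qed

text \<open>A witness whose last position is leftmost uses no active position: an active value
  \<open>\<pi> (W a)\<close> would carry a witness of its own, ending further left.\<close>
lemma southwest_occ_avoiding_active:
  assumes "southwest_occ \<pi> x y"
  obtains W where "prefix_occ \<pi> W" "W (k-3) < x" "\<forall>a\<in>A. \<pi> (W a) < y" "\<forall>a\<in>A. W a \<notin> active \<pi>"
proof -
  let ?P = "\<lambda>W. prefix_occ \<pi> W \<and> W (k-3) < x \<and> (\<forall>a\<in>A. \<pi> (W a) < y)"
  obtain W where W: "?P W" and least: "\<And>W'. ?P W' \<Longrightarrow> W (k-3) \<le> W' (k-3)"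
    using assms ex_has_least_nat[of ?P _ "\<lambda>W. W (k-3)"] unfolding southwest_occ_def by blast
  have "W a \<notin> active \<pi>" if a: "a \<in> A" for a
  proof
    assume "W a \<in> active \<pi>"
    then obtain W' where W': "prefix_occ \<pi> W'" "W' (k-3) < W a" "\<forall>b\<in>A. \<pi> (W' b) < \<pi> (W a)"
      unfolding active_def southwest_occ_def by blast
    have "W a \<le> W (k-3)" using prefix_occ_le_last W a A_subset by blast
    then have "?P W'" using W W' a by fastforce
    with least W'(2) \<open>W a \<le> W (k-3)\<close> show False by fastforce
  qed
  then show thesis using W that by blast
qed

lemma southwest_occ_transfer:
  assumes "\<And>z. z \<in> {1..n} \<Longrightarrow> z \<notin> active \<pi> \<Longrightarrow> \<pi>' z = \<pi> z" and "southwest_occ \<pi> x y"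
  shows "southwest_occ \<pi>' x y"
proof -
  obtain W where W: "prefix_occ \<pi> W" "W (k-3) < x" "\<forall>a\<in>A. \<pi> (W a) < y" "\<forall>a\<in>A. W a \<notin> active \<pi>"
    using southwest_occ_avoiding_active[OF assms(2)] by blast
  have "\<pi>' (W a) = \<pi> (W a)" if "a \<in> A" for a
    using assms(1) W(4) prefix_occ_range[OF W(1)] A_subset that by blast
  then have "prefix_occ \<pi>' W" using prefix_occ_cong W(1) by blast
  with W(2,3) \<open>\<And>a. a \<in> A \<Longrightarrow> \<pi>' (W a) = \<pi> (W a)\<close> show ?thesis
    unfolding southwest_occ_def by (intro exI[of _ W]) auto
qed

lemma southwest_occ_Suc_active:
  assumes "x \<in> active \<pi>" "southwest_occ \<pi> (Suc x) y"
  shows "southwest_occ \<pi> x y"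
proof -
  obtain W where W: "prefix_occ \<pi> W" "W (k-3) < Suc x" "\<forall>a\<in>A. \<pi> (W a) < y"
    using assms(2) unfolding southwest_occ_def by blast
  show ?thesis
  proof (cases "W (k-3) = x")
    case True
    then have "\<pi> x \<le> y" using W(3) last_in_A by force
    moreover have "southwest_occ \<pi> x (\<pi> x)" using assms(1) unfolding active_def by blast
    ultimately show ?thesis using up_closedD[OF up_closed_southwest_occ, of \<pi> x "\<pi> x" x y] by simp
  next
    case False
    then show ?thesis using W unfolding southwest_occ_def by force
  qed
qed

lemma southwest_occ_glue:
  assumes outside: "\<And>z. z \<notin> active \<pi>0 \<Longrightarrow> \<pi> z = \<pi>0 z"
    and inside: "\<And>z. z \<in> active \<pi>0 \<Longrightarrow> southwest_occ \<pi>0 z (\<pi> z)"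
  shows "southwest_occ \<pi> x y \<longleftrightarrow> southwest_occ \<pi>0 x y"
proof
  assume "southwest_occ \<pi>0 x y"
  then show "southwest_occ \<pi> x y" using southwest_occ_transfer outside by blast
next
  assume "southwest_occ \<pi> x y"
  then obtain W where W: "prefix_occ \<pi> W" "W (k-3) < x" "\<forall>a\<in>A. \<pi> (W a) < y"
    unfolding southwest_occ_def by blast
  show "southwest_occ \<pi>0 x y"
  proof (cases "\<exists>a\<in>A. W a \<in> active \<pi>0")
    case True
    then obtain a where a: "a \<in> A" "W a \<in> active \<pi>0" by blast
    have "W a \<le> x" using prefix_occ_le_last[OF W(1)] a(1) A_subset W(2) by fastforce
    moreover have "\<pi> (W a) \<le> y" using W(3) a(1) by fastforce
    ultimately show ?thesis
      using up_closedD[OF up_closed_southwest_occ inside[OF a(2)]] by blast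
  next
    case False
    then have same: "\<pi>0 (W a) = \<pi> (W a)" if "a \<in> A" for a using outside that by metis
    then have "prefix_occ \<pi>0 W" using W(1) prefix_occ_cong by blast
    with W(2,3) same show ?thesis unfolding southwest_occ_def by (intro exI[of _ W]) auto
  qed
qed

lemma skeleton_eq_iff:
  "skeleton \<pi> = skeleton \<pi>0 \<longleftrightarrow> active \<pi> = active \<pi>0 \<and> (\<forall>z. z \<notin> active \<pi>0 \<longrightarrow> \<pi> z = \<pi>0 z)"
  unfolding skeleton_def by (auto simp: restrict_def fun_eq_iff)

lemma southwest_occ_skeleton:
  assumes "skeleton \<pi> = skeleton \<pi>0"
  shows "southwest_occ \<pi> = southwest_occ \<pi>0"
proof (intro ext iffI)
  have same: "active \<pi> = active \<pi>0" "\<And>z. z \<notin> active \<pi>0 \<Longrightarrow> \<pi> z = \<pi>0 z"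
    using assms by (simp_all add: skeleton_eq_iff)
  fix x y
  show "southwest_occ \<pi>0 x y" if "southwest_occ \<pi> x y"
    using that by (rule southwest_occ_transfer[rotated]) (use same in auto)
  show "southwest_occ \<pi> x y" if "southwest_occ \<pi>0 x y"
    using that by (rule southwest_occ_transfer[rotated]) (use same in auto)
qed

lemma desc_tail_occ_iff_gapped_descent:
  assumes "skeleton \<pi> = skeleton \<pi>0"
  shows "desc_tail_occ \<pi> \<longleftrightarrow> gapped_descent (active \<pi>0) (southwest_occ \<pi>0) \<pi>"
proof -
  have "desc_tail_occ \<pi> \<longleftrightarrow> gapped_descent (active \<pi>) (southwest_occ \<pi>) \<pi>"
  proof
    assume "desc_tail_occ \<pi>"
    then obtain j l where jl: "j + 2 \<le> l" "l \<le> n" "\<pi> l < \<pi> j" "southwest_occ \<pi> j (\<pi> l)"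
      unfolding desc_tail_occ_def by blast
    have "southwest_occ \<pi> j (\<pi> j)" "southwest_occ \<pi> l (\<pi> l)"
      using up_closedD[OF up_closed_southwest_occ jl(4)] jl(1,3) by simp_all
    moreover have "1 \<le> j" using southwest_occ_pos[OF jl(4)] .
    ultimately have "j \<in> active \<pi>" "l \<in> active \<pi>" using jl(1,2) by (simp_all add: active_def)
    then show "gapped_descent (active \<pi>) (southwest_occ \<pi>) \<pi>"
      unfolding gapped_pair_def using jl by blast
  next
    assume "gapped_descent (active \<pi>) (southwest_occ \<pi>) \<pi>"
    then show "desc_tail_occ \<pi>"
      unfolding gapped_pair_def desc_tail_occ_def using active_subset by fastforce
  qed
  then show ?thesis using assms southwest_occ_skeleton[OF assms] by (simp add: skeleton_eq_iff)
qed

lemma asc_tail_occ_iff_gapped_ascent: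
  assumes "skeleton \<pi> = skeleton \<pi>0"
  shows "asc_tail_occ \<pi> \<longleftrightarrow> gapped_ascent (active \<pi>0) (southwest_occ \<pi>0) \<pi>"
proof -
  have "asc_tail_occ \<pi> \<longleftrightarrow> gapped_ascent (active \<pi>) (southwest_occ \<pi>) \<pi>"
  proof
    assume "asc_tail_occ \<pi>"
    then obtain j l where jl: "j + 2 \<le> l" "l \<le> n" "\<pi> j < \<pi> l" "southwest_occ \<pi> j (\<pi> j)"
      unfolding asc_tail_occ_def by blast
    have "southwest_occ \<pi> l (\<pi> l)"
      using up_closedD[OF up_closed_southwest_occ jl(4)] jl(1,3) by simp
    moreover have "1 \<le> j" using southwest_occ_pos[OF jl(4)] .
    ultimately have "j \<in> active \<pi>" "l \<in> active \<pi>" using jl(1,2,4) by (simp_all add: active_def)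
    then show "gapped_ascent (active \<pi>) (southwest_occ \<pi>) \<pi>"
      unfolding gapped_pair_def using jl by blast
  next
    assume "gapped_ascent (active \<pi>) (southwest_occ \<pi>) \<pi>"
    then show "asc_tail_occ \<pi>"
      unfolding gapped_pair_def asc_tail_occ_def using active_subset by fastforce
  qed
  then show ?thesis using assms southwest_occ_skeleton[OF assms] by (simp add: skeleton_eq_iff)
qed

definition refill :: "(nat \<Rightarrow> nat) \<Rightarrow> (nat \<Rightarrow> nat) \<Rightarrow> nat \<Rightarrow> nat" where
  "refill \<pi>0 \<sigma> x = (if x \<in> active \<pi>0 then \<sigma> x else \<pi>0 x)"

lemma restrict_active_in_placements:
  assumes "\<pi>0 permutes {1..n}" "\<pi> permutes {1..n}" "skeleton \<pi> = skeleton \<pi>0"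
  shows "restrict \<pi> (active \<pi>0) \<in> placements (active \<pi>0) (\<pi>0 ` active \<pi>0) (southwest_occ \<pi>0)"
proof -
  have same: "active \<pi> = active \<pi>0" "\<And>z. z \<notin> active \<pi>0 \<Longrightarrow> \<pi> z = \<pi>0 z"
    using assms(3) by (simp_all add: skeleton_eq_iff)
  have img: "\<pi> ` active \<pi>0 = \<pi>0 ` active \<pi>0"
    using same(2) by (intro permutes_image_eq_if_agree_outside[OF assms(2,1) active_subset]) blast
  then have "bij_betw \<pi> (active \<pi>0) (\<pi>0 ` active \<pi>0)"
    using inj_on_subset[OF permutes_inj[OF assms(2)]] by (simp add: bij_betw_def)
  then have "bij_betw (restrict \<pi> (active \<pi>0)) (active \<pi>0) (\<pi>0 ` active \<pi>0)"
    by (rule bij_betw_cong[THEN iffD1, rotated]) simp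
  moreover have "southwest_occ \<pi>0 x (\<pi> x)" if "x \<in> active \<pi>0" for x
  proof -
    have "x \<in> active \<pi>" using that same(1) by simp
    then have "southwest_occ \<pi> x (\<pi> x)" by (simp add: active_def)
    then show ?thesis using southwest_occ_skeleton[OF assms(3)] by simp
  qed
  ultimately show ?thesis using img by (auto simp: placements_def)
qed

lemma refill_in_fibre:
  assumes \<pi>0: "\<pi>0 permutes {1..n}"
    and \<sigma>: "\<sigma> \<in> placements (active \<pi>0) (\<pi>0 ` active \<pi>0) (southwest_occ \<pi>0)"
  shows "refill \<pi>0 \<sigma> permutes {1..n}" "skeleton (refill \<pi>0 \<sigma>) = skeleton \<pi>0"
    "restrict (refill \<pi>0 \<sigma>) (active \<pi>0) = \<sigma>"
proof -
  show "refill \<pi>0 \<sigma> permutes {1..n}"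
    unfolding refill_def[abs_def] by (rule permutes_refill[OF \<pi>0 active_subset placementsD(2)[OF \<sigma>]])
  have outside: "\<And>z. z \<notin> active \<pi>0 \<Longrightarrow> refill \<pi>0 \<sigma> z = \<pi>0 z"
    and inside: "\<And>z. z \<in> active \<pi>0 \<Longrightarrow> southwest_occ \<pi>0 z (refill \<pi>0 \<sigma> z)"
    using placementsD(3)[OF \<sigma>] by (simp_all add: refill_def)
  have occ: "southwest_occ (refill \<pi>0 \<sigma>) x y \<longleftrightarrow> southwest_occ \<pi>0 x y" for x y
    by (rule southwest_occ_glue[OF outside inside])
  have "active (refill \<pi>0 \<sigma>) = active \<pi>0"
  proof (intro set_eqI iffI)
    fix x assume "x \<in> active (refill \<pi>0 \<sigma>)"
    then have x: "x \<in> {1..n}" "southwest_occ \<pi>0 x (refill \<pi>0 \<sigma> x)" by (simp_all add: active_def occ)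
    show "x \<in> active \<pi>0"
    proof (rule ccontr)
      assume "x \<notin> active \<pi>0"
      with x outside show False by (simp add: active_def)
    qed
  next
    fix x assume "x \<in> active \<pi>0"
    with inside active_subset show "x \<in> active (refill \<pi>0 \<sigma>)" by (auto simp: active_def occ)
  qed
  then show "skeleton (refill \<pi>0 \<sigma>) = skeleton \<pi>0"
    using outside by (simp add: skeleton_eq_iff)
  show "restrict (refill \<pi>0 \<sigma>) (active \<pi>0) = \<sigma>"
  proof
    fix x
    show "restrict (refill \<pi>0 \<sigma>) (active \<pi>0) x = \<sigma> x"
      using PiE_arb[OF placementsD(1)[OF \<sigma>], of x] by (simp add: refill_def)
  qed
qed

lemma fibre_bij:
  assumes "\<pi>0 permutes {1..n}"
  shows "bij_betw (\<lambda>\<pi>. restrict \<pi> (active \<pi>0)) {\<pi>. \<pi> permutes {1..n} \<and> skeleton \<pi> = skeleton \<pi>0}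
    (placements (active \<pi>0) (\<pi>0 ` active \<pi>0) (southwest_occ \<pi>0))"
proof (rule bij_betw_byWitness[where f' = "refill \<pi>0"])
  show "\<forall>\<pi>\<in>{\<pi>. \<pi> permutes {1..n} \<and> skeleton \<pi> = skeleton \<pi>0}. refill \<pi>0 (restrict \<pi> (active \<pi>0)) = \<pi>"
    by (auto simp: refill_def skeleton_eq_iff)
qed (use restrict_active_in_placements[OF assms] refill_in_fibre[OF assms] in auto)

lemma card_fibre_avoiding:
  assumes "\<pi>0 permutes {1..n}"
    and "\<And>\<pi>. skeleton \<pi> = skeleton \<pi>0 \<Longrightarrow> P \<pi> \<longleftrightarrow> gapped_pair (active \<pi>0) T \<pi>"
  shows "card {\<pi>. \<pi> permutes {1..n} \<and> skeleton \<pi> = skeleton \<pi>0 \<and> \<not> P \<pi>} =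
    card {\<sigma>\<in>placements (active \<pi>0) (\<pi>0 ` active \<pi>0) (southwest_occ \<pi>0). \<not> gapped_pair (active \<pi>0) T \<sigma>}"
proof -
  have "card {\<pi>\<in>{\<pi>. \<pi> permutes {1..n} \<and> skeleton \<pi> = skeleton \<pi>0}. \<not> P \<pi>} =
      card {\<sigma>\<in>placements (active \<pi>0) (\<pi>0 ` active \<pi>0) (southwest_occ \<pi>0). \<not> gapped_pair (active \<pi>0) T \<sigma>}"
  proof (rule card_Collect_bij_betw[OF fibre_bij[OF assms(1)]])
    fix \<pi> assume "\<pi> \<in> {\<pi>. \<pi> permutes {1..n} \<and> skeleton \<pi> = skeleton \<pi>0}"
    then have "P \<pi> \<longleftrightarrow> gapped_pair (active \<pi>0) T \<pi>" using assms(2) by blast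
    also have "\<dots> \<longleftrightarrow> gapped_pair (active \<pi>0) T (restrict \<pi> (active \<pi>0))"
      by (rule gapped_pair_cong) simp
    finally show "\<not> P \<pi> \<longleftrightarrow> \<not> gapped_pair (active \<pi>0) T (restrict \<pi> (active \<pi>0))" by simp
  qed
  then show ?thesis by (simp add: conj_assoc)
qed

theorem card_desc_free_eq_asc_free:
  "card {\<pi>. \<pi> permutes {1..n} \<and> \<not> desc_tail_occ \<pi>} = card {\<pi>. \<pi> permutes {1..n} \<and> \<not> asc_tail_occ \<pi>}"
proof -
  let ?S = "{\<pi>. \<pi> permutes {1..n}}"
  have "card {\<pi>\<in>?S. \<not> desc_tail_occ \<pi>} = card {\<pi>\<in>?S. \<not> asc_tail_occ \<pi>}"
  proof (rule card_Collect_eq_by_fibres[where f = skeleton])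
    show "finite ?S" by (rule finite_permutations) simp
    fix \<kappa> assume "\<kappa> \<in> skeleton ` ?S"
    then obtain \<pi>0 where \<pi>0: "\<pi>0 permutes {1..n}" and \<kappa>: "\<kappa> = skeleton \<pi>0" by blast
    let ?X = "active \<pi>0" and ?Y = "\<pi>0 ` active \<pi>0" and ?g = "southwest_occ \<pi>0"
    have "finite ?X" using active_subset by (rule finite_subset) simp
    moreover have "card ?Y = card ?X"
      using card_image[OF inj_on_subset[OF permutes_inj[OF \<pi>0] subset_UNIV]] .
    ultimately have rows: "same_row_lengths ?X ?Y ?Y ?g" by (simp add: same_row_lengths_def)
    have "card {\<pi>\<in>?S. skeleton \<pi> = \<kappa> \<and> \<not> desc_tail_occ \<pi>} =
        card {\<sigma>\<in>placements ?X ?Y ?g. \<not> gapped_descent ?X ?g \<sigma>}"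
      using card_fibre_avoiding[OF \<pi>0 desc_tail_occ_iff_gapped_descent] \<kappa> by simp
    also have "\<dots> = card {\<sigma>\<in>placements ?X ?Y ?g. \<not> gapped_ascent ?X ?g \<sigma>}"
      using rows southwest_occ_Suc_active
      by (intro card_descent_free_eq_ascent_free[OF up_closed_southwest_occ]) auto
    also have "\<dots> = card {\<pi>\<in>?S. skeleton \<pi> = \<kappa> \<and> \<not> asc_tail_occ \<pi>}"
      using card_fibre_avoiding[OF \<pi>0 asc_tail_occ_iff_gapped_ascent] \<kappa> by simp
    finally show "card {\<pi>\<in>?S. skeleton \<pi> = \<kappa> \<and> \<not> desc_tail_occ \<pi>} =
      card {\<pi>\<in>?S. skeleton \<pi> = \<kappa> \<and> \<not> asc_tail_occ \<pi>}" .
  qed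
  then show ?thesis by simp
qed

section \<open>Occurrences of patterns with a two-element tail\<close>

text \<open>Positions of a pattern occurrence assembled from a prefix occurrence \<open>W\<close> and the
  positions \<open>j\<close>, \<open>l\<close> of the tail labels \<open>k - 2\<close>, \<open>k\<close>; the isolated label \<open>k - 1\<close> takes
  position \<open>Suc j\<close>, which is why \<open>j + 2 \<le> l\<close> is all that is required.\<close>
definition tail_embedding :: "(nat \<Rightarrow> nat) \<Rightarrow> nat \<Rightarrow> nat \<Rightarrow> nat \<Rightarrow> nat" where
  "tail_embedding W j l i =
     (if i \<le> k - 3 then W i else if i = k - 2 then j else if i = k - 1 then Suc j else l)"

lemma tail_labels:
  "k - 3 \<in> {1..k}" "k - 2 \<in> {1..k} - {k - 1}" "k - 1 \<in> {1..k}" "k \<in> {1..k} - {k - 1}"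
  "k - 3 < k - 2" "k - 2 < k - 1" "k - 1 < k"
  using k_ge_4 by (simp_all only: Diff_iff atLeastAtMost_iff singleton_iff) arith+

lemma A_bounds:
  assumes "a \<in> A"
  shows "a \<le> k - 3" "a \<in> {1..k} - {k - 1}"
proof -
  from assms A_subset have "1 \<le> a" "a \<le> k - 3" by auto
  with k_ge_4 show "a \<le> k - 3" "a \<in> {1..k} - {k - 1}"
    by (simp_all only: Diff_iff atLeastAtMost_iff singleton_iff) arith+
qed

lemma tail_embedding_simps:
  "i \<le> k - 3 \<Longrightarrow> tail_embedding W j l i = W i" "tail_embedding W j l (k - 2) = j"
  "tail_embedding W j l (k - 1) = Suc j" "tail_embedding W j l k = l"
  unfolding tail_embedding_def using k_ge_4 by auto

lemma tail_embedding_strict_mono: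
  assumes W: "prefix_occ \<pi> W" and jl: "W (k-3) < j" "j + 2 \<le> l"
  shows "strict_mono_on {1..k} (tail_embedding W j l)"
proof (rule strict_mono_onI)
  fix r s assume rs: "r \<in> {1..k}" "s \<in> {1..k}" "r < s"
  show "tail_embedding W j l r < tail_embedding W j l s"
  proof (cases "s \<le> k - 3")
    case True
    have "strict_mono_on {1..k-3} W" using W by (simp add: prefix_occ_def)
    then have "W r < W s" by (rule strict_mono_onD) (use rs True in auto)
    then show ?thesis using rs True by (simp add: tail_embedding_simps)
  next
    case False
    have "s \<le> k" using rs(2) by simp
    with False k_ge_4 have s: "s = k - 2 \<or> s = k - 1 \<or> s = k" by arith
    show ?thesis
    proof (cases "r \<le> k - 3")
      case True
      then have "tail_embedding W j l r \<le> W (k - 3)"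
        using prefix_occ_le_last[OF W] rs(1) by (simp add: tail_embedding_simps)
      moreover have "j \<le> tail_embedding W j l s" using s jl tail_embedding_simps(2-4) by auto
      ultimately show ?thesis using jl(1) by linarith
    next
      case False
      with rs(3) \<open>s \<le> k\<close> k_ge_4
      have "r = k - 2 \<and> s = k - 1 \<or> r = k - 2 \<and> s = k \<or> r = k - 1 \<and> s = k" by arith
      then show ?thesis using jl(2) tail_embedding_simps(2-4) by auto
    qed
  qed
qed

lemma tail_embedding_range:
  assumes W: "prefix_occ \<pi> W" and jl: "W (k-3) < j" "j + 2 \<le> l" "l \<le> n"
  shows "tail_embedding W j l ` {1..k} \<subseteq> {1..n}"
proof (rule image_subsetI)
  fix i assume i: "i \<in> {1..k}"
  show "tail_embedding W j l i \<in> {1..n}"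
  proof (cases "i \<le> k - 3")
    case True
    then show ?thesis using prefix_occ_range[OF W] i by (simp add: tail_embedding_simps)
  next
    case False
    have "i \<le> k" using i by simp
    with False k_ge_4 have "i = k - 2 \<or> i = k - 1 \<or> i = k" by arith
    moreover have "1 \<le> W (k-3)" using prefix_occ_range[OF W last_in_prefix] by simp
    ultimately show ?thesis using jl tail_embedding_simps(2-4) by auto
  qed
qed

lemma tail_embedding_self:
  assumes "w \<in> {1..k} - {k - 1}"
  shows "tail_embedding idx (idx (k-2)) (idx k) w = idx w"
proof -
  have "w \<le> k" "w \<noteq> k - 1" using assms by simp_all
  with k_ge_4 have "w \<le> k - 3 \<or> w = k - 2 \<or> w = k" by arith
  then show ?thesis using tail_embedding_simps(1,2,4) by auto
qed

lemma contains_iff_tail_embedding: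
  assumes R': "\<And>u v. pop_less R' u v \<Longrightarrow> u \<in> {1..k} - {k - 1} \<and> v \<in> {1..k} - {k - 1}"
    and R: "\<And>a b. a \<in> A \<Longrightarrow> b \<in> A \<Longrightarrow> pop_less R a b \<Longrightarrow> pop_less R' a b"
  shows "contains \<pi> n k R' \<longleftrightarrow> (\<exists>W j l. prefix_occ \<pi> W \<and> W (k-3) < j \<and> j + 2 \<le> l \<and> l \<le> n \<and>
    (\<forall>u v. pop_less R' u v \<longrightarrow> \<pi> (tail_embedding W j l u) < \<pi> (tail_embedding W j l v)))"
proof
  assume "contains \<pi> n k R'"
  then obtain idx where mono: "strict_mono_on {1..k} idx" and range: "idx ` {1..k} \<subseteq> {1..n}"
    and rel: "\<forall>u\<in>{1..k}. \<forall>v\<in>{1..k}. pop_less R' u v \<longrightarrow> \<pi> (idx u) < \<pi> (idx v)"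
    unfolding contains_def by (elim exE conjE)
  have prefix: "{1..k-3} \<subseteq> {1..k}" by (simp add: atLeastatMost_subset_iff)
  have "prefix_occ \<pi> idx"
    unfolding prefix_occ_def
  proof (intro conjI ballI impI)
    show "strict_mono_on {1..k-3} idx" using mono prefix by (rule monotone_on_subset)
    show "idx ` {1..k-3} \<subseteq> {1..n}" using range prefix by blast
    fix a b assume "a \<in> A" "b \<in> A" "pop_less R a b"
    then show "\<pi> (idx a) < \<pi> (idx b)" using rel R A_bounds(2) by blast
  qed
  moreover have "idx (k-3) < idx (k-2)" "idx (k-2) < idx (k-1)" "idx (k-1) < idx k"
    using strict_mono_onD[OF mono] tail_labels by blast+
  moreover have "idx k \<in> {1..n}" using range tail_labels(4) by blast
  then have "idx k \<le> n" by simp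
  moreover have "\<forall>u v. pop_less R' u v \<longrightarrow>
      \<pi> (tail_embedding idx (idx (k-2)) (idx k) u) < \<pi> (tail_embedding idx (idx (k-2)) (idx k) v)"
  proof (intro allI impI)
    fix u v assume uv: "pop_less R' u v"
    with R'[OF uv] rel tail_embedding_self show "\<pi> (tail_embedding idx (idx (k-2)) (idx k) u) <
      \<pi> (tail_embedding idx (idx (k-2)) (idx k) v)" by simp
  qed
  ultimately show "\<exists>W j l. prefix_occ \<pi> W \<and> W (k-3) < j \<and> j + 2 \<le> l \<and> l \<le> n \<and>
    (\<forall>u v. pop_less R' u v \<longrightarrow> \<pi> (tail_embedding W j l u) < \<pi> (tail_embedding W j l v))"
    by (intro exI[of _ idx] exI[of _ "idx (k-2)"] exI[of _ "idx k"]) simp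
next
  assume "\<exists>W j l. prefix_occ \<pi> W \<and> W (k-3) < j \<and> j + 2 \<le> l \<and> l \<le> n \<and>
    (\<forall>u v. pop_less R' u v \<longrightarrow> \<pi> (tail_embedding W j l u) < \<pi> (tail_embedding W j l v))"
  then obtain W j l where W: "prefix_occ \<pi> W" "W (k-3) < j" "j + 2 \<le> l" "l \<le> n"
    and rel: "\<forall>u v. pop_less R' u v \<longrightarrow> \<pi> (tail_embedding W j l u) < \<pi> (tail_embedding W j l v)"
    by (elim exE conjE)
  show "contains \<pi> n k R'"
    unfolding contains_def
    using tail_embedding_strict_mono[OF W(1-3)] tail_embedding_range[OF W] rel
    by (intro exI[of _ "tail_embedding W j l"]) simp
qed

lemma tail_embedding_respects_iff:
  assumes R': "\<And>u v. pop_less R' u v \<longleftrightarrow>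
      (u \<in> A \<and> v \<in> A \<and> pop_less R u v) \<or> (u \<in> A \<and> (v = k - 2 \<or> v = k)) \<or> (u = t \<and> v = h)"
    and th: "t = k - 2 \<and> h = k \<or> t = k \<and> h = k - 2" and W: "prefix_occ \<pi> W"
  shows "(\<forall>u v. pop_less R' u v \<longrightarrow> \<pi> (tail_embedding W j l u) < \<pi> (tail_embedding W j l v)) \<longleftrightarrow>
    (\<forall>a\<in>A. \<pi> (W a) < \<pi> (tail_embedding W j l t)) \<and>
    \<pi> (tail_embedding W j l t) < \<pi> (tail_embedding W j l h)"
  (is "?emb \<longleftrightarrow> ?below \<and> ?tail")
proof
  assume emb: ?emb
  have ?below
  proof
    fix a assume a: "a \<in> A"
    then have "pop_less R' a t" using th unfolding R' by blast
    with emb have "\<pi> (tail_embedding W j l a) < \<pi> (tail_embedding W j l t)" by blast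
    then show "\<pi> (W a) < \<pi> (tail_embedding W j l t)"
      using A_bounds(1)[OF a] by (simp add: tail_embedding_simps(1))
  qed
  moreover have ?tail using emb R' by blast
  ultimately show "?below \<and> ?tail" ..
next
  assume "?below \<and> ?tail"
  then have below: ?below and tail: ?tail by blast+
  show ?emb
  proof (intro allI impI)
    fix u v assume "pop_less R' u v"
    then consider "u \<in> A" "v \<in> A" "pop_less R u v" | "u \<in> A" "v = t" | "u \<in> A" "v = h"
      | "u = t" "v = h"
      using th unfolding R' by blast
    then show "\<pi> (tail_embedding W j l u) < \<pi> (tail_embedding W j l v)"
    proof cases
      case 1
      then show ?thesis using W A_bounds(1) by (simp add: prefix_occ_def tail_embedding_simps(1))
    next
      case 2
      then show ?thesis using below A_bounds(1) by (simp add: tail_embedding_simps(1))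
    next
      case 3
      then show ?thesis using below tail A_bounds(1) by (fastforce simp: tail_embedding_simps(1))
    next
      case 4
      then show ?thesis using tail by simp
    qed
  qed
qed

lemma contains_iff_tail:
  assumes R': "\<And>u v. pop_less R' u v \<longleftrightarrow>
      (u \<in> A \<and> v \<in> A \<and> pop_less R u v) \<or> (u \<in> A \<and> (v = k - 2 \<or> v = k)) \<or> (u = t \<and> v = h)"
    and th: "t = k - 2 \<and> h = k \<or> t = k \<and> h = k - 2"
  shows "contains \<pi> n k R' \<longleftrightarrow> (\<exists>W j l. prefix_occ \<pi> W \<and> W (k-3) < j \<and> j + 2 \<le> l \<and> l \<le> n \<and>
    (\<forall>a\<in>A. \<pi> (W a) < \<pi> (tail_embedding W j l t)) \<and>
    \<pi> (tail_embedding W j l t) < \<pi> (tail_embedding W j l h))"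
proof -
  have tail: "t \<in> {1..k} - {k - 1}" "h \<in> {1..k} - {k - 1}"
    using th tail_labels(2,4) by (elim disjE conjE; simp)+
  have "contains \<pi> n k R' \<longleftrightarrow> (\<exists>W j l. prefix_occ \<pi> W \<and> W (k-3) < j \<and> j + 2 \<le> l \<and> l \<le> n \<and>
    (\<forall>u v. pop_less R' u v \<longrightarrow> \<pi> (tail_embedding W j l u) < \<pi> (tail_embedding W j l v)))"
  proof (rule contains_iff_tail_embedding)
    show "u \<in> {1..k} - {k - 1} \<and> v \<in> {1..k} - {k - 1}" if "pop_less R' u v" for u v
    proof -
      from that have "u \<in> A \<and> v \<in> A \<or> u \<in> A \<and> (v = k - 2 \<or> v = k) \<or> u = t \<and> v = h"
        unfolding R' by blast
      then show ?thesis using tail tail_labels(2,4) A_bounds(2) by (elim disjE conjE) simp_all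
    qed
    show "pop_less R' a b" if "a \<in> A" "b \<in> A" "pop_less R a b" for a b
      using that unfolding R' by blast
  qed
  then show ?thesis using tail_embedding_respects_iff[OF R' th] by (simp cong: conj_cong)
qed

lemma contains_iff_desc_tail_occ:
  assumes "\<And>u v. pop_less R' u v \<longleftrightarrow>
      (u \<in> A \<and> v \<in> A \<and> pop_less R u v) \<or> (u \<in> A \<and> (v = k - 2 \<or> v = k)) \<or> (u = k \<and> v = k - 2)"
  shows "contains \<pi> n k R' \<longleftrightarrow> desc_tail_occ \<pi>"
proof -
  have "contains \<pi> n k R' \<longleftrightarrow> (\<exists>W j l. prefix_occ \<pi> W \<and> W (k-3) < j \<and> j + 2 \<le> l \<and> l \<le> n \<and>
    (\<forall>a\<in>A. \<pi> (W a) < \<pi> l) \<and> \<pi> l < \<pi> j)"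
    using contains_iff_tail[OF assms] by (simp add: tail_embedding_simps)
  then show ?thesis unfolding desc_tail_occ_def southwest_occ_def by blast
qed

lemma contains_iff_asc_tail_occ:
  assumes "\<And>u v. pop_less R' u v \<longleftrightarrow>
      (u \<in> A \<and> v \<in> A \<and> pop_less R u v) \<or> (u \<in> A \<and> (v = k - 2 \<or> v = k)) \<or> (u = k - 2 \<and> v = k)"
  shows "contains \<pi> n k R' \<longleftrightarrow> asc_tail_occ \<pi>"
proof -
  have "contains \<pi> n k R' \<longleftrightarrow> (\<exists>W j l. prefix_occ \<pi> W \<and> W (k-3) < j \<and> j + 2 \<le> l \<and> l \<le> n \<and>
    (\<forall>a\<in>A. \<pi> (W a) < \<pi> j) \<and> \<pi> j < \<pi> l)"
    using contains_iff_tail[OF assms] by (simp add: tail_embedding_simps)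
  then show ?thesis unfolding asc_tail_occ_def southwest_occ_def by blast
qed

end

section \<open>Partially ordered patterns with a swapped tail\<close>

lemma pop_less_in_range:
  assumes "pop k r" "pop_less r u v"
  shows "u \<in> {1..k}" "v \<in> {1..k}"
  using assms unfolding pop_def pop_less_def by auto

lemma pop_less_asym:
  assumes "pop k r" "pop_less r u v"
  shows "\<not> pop_less r v u"
  using assms unfolding pop_def pop_less_def partial_order_on_def antisym_def by blast

lemma pop_less_not_isolated:
  assumes "pop k r" "pop_less r u v"
  shows "u \<notin> isolated k r" "v \<notin> isolated k r"
  using pop_less_in_range[OF assms] assms(2) unfolding isolated_def pop_less_def by auto

lemma pop_less_iff_tail:
  assumes k: "4 \<le> k" and r: "pop k r" and I: "isolated k r = I" "k - 1 \<in> I"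
    and below: "\<forall>x \<in> {1..k-3} - I. pop_less r x (k - 2) \<and> pop_less r x k"
    and tail: "pop_less r t h" "t = k - 2 \<and> h = k \<or> t = k \<and> h = k - 2"
  shows "pop_less r u v \<longleftrightarrow> (u \<in> {1..k-3} - I \<and> v \<in> {1..k-3} - I \<and> pop_less r u v) \<or>
    (u \<in> {1..k-3} - I \<and> (v = k - 2 \<or> v = k)) \<or> (u = t \<and> v = h)"
proof
  assume uv: "pop_less r u v"
  have label: "w \<in> {1..k-3} - I \<or> w = k - 2 \<or> w = k" if "w \<in> {1..k}" "w \<notin> I" for w
  proof (cases "w \<le> k - 3")
    case True
    then show ?thesis using that by simp
  next
    case False
    have "w \<le> k" "w \<noteq> k - 1" using that I(2) by auto
    with False k have "w = k - 2 \<or> w = k" by arith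
    then show ?thesis by blast
  qed
  have "u \<notin> I" "v \<notin> I" using pop_less_not_isolated[OF r uv] I(1) by simp_all
  then have u: "u \<in> {1..k-3} - I \<or> u = k - 2 \<or> u = k" and v: "v \<in> {1..k-3} - I \<or> v = k - 2 \<or> v = k"
    using label pop_less_in_range[OF r uv] by blast+
  have asym: "\<not> pop_less r v u" "\<not> pop_less r h t"
    using pop_less_asym[OF r uv] pop_less_asym[OF r tail(1)] .
  show "(u \<in> {1..k-3} - I \<and> v \<in> {1..k-3} - I \<and> pop_less r u v) \<or>
    (u \<in> {1..k-3} - I \<and> (v = k - 2 \<or> v = k)) \<or> (u = t \<and> v = h)"
  proof (cases "u \<in> {1..k-3} - I")
    case True
    then show ?thesis using v uv by blast
  next
    case False
    then have u': "u = k - 2 \<or> u = k" using u by blast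
    have "v \<notin> {1..k-3} - I" using below u' asym(1) by auto
    then have "v = k - 2 \<or> v = k" using v by blast
    moreover have "u \<noteq> v" using uv by (simp add: pop_less_def)
    ultimately have "u = k - 2 \<and> v = k \<or> u = k \<and> v = k - 2" using u' by auto
    then show ?thesis using tail(2) uv asym(2) by auto
  qed
qed (use below tail(1) in auto)

theorem theorem1p3:
  fixes k :: nat and p p' :: "(nat \<times> nat) set" and I :: "nat set"
  assumes "k \<ge> 4"
    and "pop k p" and "pop k p'"
    and "isolated k p = I" and "isolated k p' = I"
    and "k - 1 \<in> I" and "k - 3 \<notin> I" and "k - 2 \<notin> I" and "k \<notin> I"
    and "\<forall>x \<in> {1..k-3} - I. pop_less p x (k - 2) \<and> pop_less p x k"
    and "\<forall>x \<in> {1..k-3} - I. pop_less p' x (k - 2) \<and> pop_less p' x k"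
    and "p \<inter> (({1..k-3} - I) \<times> ({1..k-3} - I)) = p' \<inter> (({1..k-3} - I) \<times> ({1..k-3} - I))"
    and "pop_less p k (k - 2)" and "pop_less p' (k - 2) k"
  shows "wilf_equiv k p p'"
proof -
  define A where "A = {1..k-3} - I"
  have same_on_A: "pop_less p' u v \<longleftrightarrow> pop_less p u v" if "u \<in> A" "v \<in> A" for u v
    using assms(12) that unfolding A_def pop_less_def by blast
  have p: "pop_less p u v \<longleftrightarrow>
      (u \<in> A \<and> v \<in> A \<and> pop_less p u v) \<or> (u \<in> A \<and> (v = k - 2 \<or> v = k)) \<or> (u = k \<and> v = k - 2)" for u v
    unfolding A_def using pop_less_iff_tail[OF assms(1,2,4,6,10,13)] by simp
  have p': "pop_less p' u v \<longleftrightarrow>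
      (u \<in> A \<and> v \<in> A \<and> pop_less p u v) \<or> (u \<in> A \<and> (v = k - 2 \<or> v = k)) \<or> (u = k - 2 \<and> v = k)" for u v
    using pop_less_iff_tail[OF assms(1,3,5,6,11,14)] same_on_A unfolding A_def by auto
  show ?thesis unfolding wilf_equiv_def
  proof (intro allI impI)
    fix n :: nat
    interpret tail_swap n k A p using assms(1,7) by unfold_locales (auto simp: A_def)
    show "card (avoiders n k p) = card (avoiders n k p')"
      using card_desc_free_eq_asc_free
      unfolding avoiders_def contains_iff_desc_tail_occ[OF p] contains_iff_asc_tail_occ[OF p'] .
  qed
qed

end
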